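(* Consider the (1+1) EA maximizing $\mathrm{LeadingOnes}$ on $\{0,1\}^n$, and let $V_t$ be the $\mathrm{LeadingOnes}$ value of its current search point after $t$ iterations. Then for all $t\le\frac{e-1}{2}n^2-n^{3/2}\log n$, \[ \mathbb{E}[V_t]\ \ge\ \frac{2t}{en}-O(1). \]
   Context: $\mathrm{LeadingOnes}(x)=\sum_{i=1}^n\prod_{j=1}^i x_j$ for $x\in\{0,1\}^n$. The (1+1) EA maximizing $f\colon\{0,1\}^n\to\mathbb{R}$: choose $x\in\{0,1\}^n$ uniformly at random; then repeatedly (one iteration) create $y$ from $x$ by flipping each bit independently with probability $1/n$, and replace $x$ by $y$ if $f(y)\ge f(x)$; the algorithm stops once the optimum is reached (the search point then stays at the optimum). The $O(1)$ term is a constant independent of $n$ and $t$. *)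

theory Defs
  imports "HOL-Probability.Probability"
begin

text \<open>Search points in {0,1}^n are represented as bool lists of length n
  (True = bit 1). x_j is the j-th entry, i.e. xs ! (j-1).\<close>

definition LeadingOnes :: "bool list \<Rightarrow> nat" where
  "LeadingOnes xs = (\<Sum>i=1..length xs. \<Prod>j=1..i. (if xs ! (j - 1) then 1 else 0))"

fun mutate :: "real \<Rightarrow> bool list \<Rightarrow> bool list pmf" where
  "mutate p [] = return_pmf []"
| "mutate p (b # bs) =
     bind_pmf (bernoulli_pmf p) (\<lambda>f. bind_pmf (mutate p bs) (\<lambda>ys. return_pmf ((b \<noteq> f) # ys)))"

definition ea_step :: "nat \<Rightarrow> bool list \<Rightarrow> bool list pmf" where
  "ea_step n x =
     (if LeadingOnes x = n then return_pmf x
      else bind_pmf (mutate (1 / real n) x)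
             (\<lambda>y. return_pmf (if LeadingOnes y \<ge> LeadingOnes x then y else x)))"

fun ea_state :: "nat \<Rightarrow> nat \<Rightarrow> bool list pmf" where
  "ea_state n 0 = pmf_of_set {xs. length xs = n}"
| "ea_state n (Suc t) = bind_pmf (ea_state n t) (ea_step n)"

definition expected_LO :: "nat \<Rightarrow> nat \<Rightarrow> real" where
  "expected_LO n t = measure_pmf.expectation (ea_state n t) (\<lambda>x. real (LeadingOnes x))"

end

theory Submission
  imports Defs
begin

(*
  Given its LeadingOnes value i < n, the search point of the (1+1) EA is uniformly distributed
  on the level {x. LeadingOnes x = i}: the bits behind the first zero have never influenced
  selection. So the LeadingOnes value is itself a Markov chain on {0..n}. From level i it
  improves with probability (1 - 1/n)^i / n, and then gains one plus the number of free riders,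
  the leading ones of the n - i - 1 uniform bits behind the flipped one.

  The expected gain from level i is at least 2/(e n) minus a boundary term 2/n * 2^-(n-i), so
  E[V_t] >= 2t/(e n) minus the sum of the expected boundary terms along the chain. To bound this
  sum, measure level k by the potential F(k) = sum (l < k) of (n/(n-1))^l, whose expected
  increase per step is at most about 2/n while F(n) >= (e - 1)(n - 1). With mu = n^(-1/2),
  E[exp(mu F(V_t))] grows per step by a factor of about 1 + 2 mu/n + O(mu^2/n), and the
  boundary term at level i is at most 2/n * exp(mu (F(i) - F(n))). Up to the time
  (e - 1)/2 n^2 - n^(3/2) ln n this makes every boundary term O(n^-3), hence their sum O(1).
*)

section \<open>Expectations along finite-state chains\<close>

abbreviation expect :: "'a pmf \<Rightarrow> ('a \<Rightarrow> real) \<Rightarrow> real" where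
  "expect M f \<equiv> measure_pmf.expectation M f"

lemma expect_mono_finite:
  assumes "finite (set_pmf M)" "\<And>x. x \<in> set_pmf M \<Longrightarrow> f x \<le> g x"
  shows "expect M f \<le> expect M g"
  using assms by (intro integral_mono_AE integrable_measure_pmf_finite) (auto simp: AE_measure_pmf_iff)

lemma expect_bind_pmf_finite:
  assumes "finite S" "set_pmf M \<subseteq> S" "\<And>i. i \<in> S \<Longrightarrow> finite (set_pmf (K i))"
  shows "expect (bind_pmf M K) f = expect M (\<lambda>i. expect (K i) f)"
proof -
  have "expect M (\<lambda>i. expect (K i) f) = (\<Sum>i\<in>S. pmf M i * expect (K i) f)"
    using assms by (subst integral_measure_pmf[of S]) auto
  then show ?thesis
    using assms pmf_expectation_bind[of S K M f] by simp
qed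

lemma expect_bind_bernoulli_pmf:
  assumes "0 \<le> q" "q \<le> 1" "\<And>b. finite (set_pmf (K b))"
  shows "expect (bind_pmf (bernoulli_pmf q) K) f = q * expect (K True) f + (1 - q) * expect (K False) f"
  using assms by (simp add: expect_bind_pmf_finite[of UNIV])

locale finite_pmf_chain =
  fixes X :: "nat \<Rightarrow> 'a pmf" and K :: "'a \<Rightarrow> 'a pmf" and S :: "'a set"
  assumes chain: "X (Suc t) = bind_pmf (X t) K"
    and finite_states: "finite S"
    and init: "set_pmf (X 0) \<subseteq> S"
    and closed: "i \<in> S \<Longrightarrow> set_pmf (K i) \<subseteq> S"
begin

lemma set_pmf_subset: "set_pmf (X t) \<subseteq> S"
  by (induction t) (use init closed in \<open>auto simp: chain\<close>)

lemma finite_set_pmf: "finite (set_pmf (X t))"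
  using set_pmf_subset finite_states by (rule finite_subset)

lemma expect_Suc: "expect (X (Suc t)) g = expect (X t) (\<lambda>i. expect (K i) g)"
  using finite_subset[OF closed finite_states]
  by (simp add: chain expect_bind_pmf_finite[OF finite_states set_pmf_subset])

lemma additive_drift:
  fixes g h :: "'a \<Rightarrow> real"
  assumes drift: "\<And>i. i \<in> S \<Longrightarrow> g i + c - h i \<le> expect (K i) g"
  shows "expect (X 0) g + real t * c - (\<Sum>s<t. expect (X s) h) \<le> expect (X t) g"
proof (induction t)
  case 0
  show ?case
    by simp
next
  case (Suc t)
  have "expect (X t) g + c - expect (X t) h = expect (X t) (\<lambda>i. g i + c - h i)"
    using finite_set_pmf by (simp add: integrable_measure_pmf_finite)
  also have "\<dots> \<le> expect (X (Suc t)) g"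
    unfolding expect_Suc using finite_set_pmf set_pmf_subset drift by (intro expect_mono_finite) auto
  finally show ?case
    using Suc.IH by (simp add: algebra_simps)
qed

lemma multiplicative_drift:
  fixes g :: "'a \<Rightarrow> real"
  assumes "0 \<le> a" and drift: "\<And>i. i \<in> S \<Longrightarrow> expect (K i) g \<le> a * g i"
  shows "expect (X t) g \<le> a ^ t * expect (X 0) g"
proof (induction t)
  case 0
  show ?case
    by simp
next
  case (Suc t)
  have "expect (X (Suc t)) g \<le> expect (X t) (\<lambda>i. a * g i)"
    unfolding expect_Suc using finite_set_pmf set_pmf_subset drift by (intro expect_mono_finite) auto
  also have "\<dots> \<le> a * (a ^ t * expect (X 0) g)"
    using Suc.IH \<open>0 \<le> a\<close> by (simp add: mult_left_mono)
  finally show ?case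
    by simp
qed

end

section \<open>LeadingOnes and standard bit mutation\<close>

lemma LeadingOnes_Nil [simp]: "LeadingOnes [] = 0"
  by (simp add: LeadingOnes_def)

lemma LeadingOnes_Cons [simp]:
  "LeadingOnes (b # xs) = (if b then Suc (LeadingOnes xs) else 0)"
proof -
  define ind where "ind ys j = (if ys ! j then 1 else 0 :: nat)" for ys j
  have lessThan_form: "LeadingOnes ys = (\<Sum>i<length ys. \<Prod>j<Suc i. ind ys j)" for ys
    by (simp add: LeadingOnes_def ind_def sum.atLeast1_atMost_eq prod.atLeast1_atMost_eq)
  have "(\<Sum>i<Suc (length xs). \<Prod>j<Suc i. ind (b # xs) j)
      = ind (b # xs) 0 * (1 + (\<Sum>i<length xs. \<Prod>j<Suc i. ind xs j))"
    by (simp only: sum.lessThan_Suc_shift prod.lessThan_Suc_shift[of _ "Suc _"])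
      (simp add: ind_def sum_distrib_left)
  then show ?thesis
    by (simp add: lessThan_form ind_def)
qed

lemma LeadingOnes_replicate_True_append [simp]:
  "LeadingOnes (replicate i True @ ys) = i + LeadingOnes ys"
  by (induction i) auto

lemma LeadingOnes_replicate_True [simp]: "LeadingOnes (replicate i True) = i"
  using LeadingOnes_replicate_True_append[of i "[]"] by simp

lemma LeadingOnes_append_ge_iff:
  "length xs = i \<Longrightarrow> i \<le> LeadingOnes (xs @ ys) \<longleftrightarrow> xs = replicate i True"
  by (induction xs arbitrary: i) (auto split: nat.splits)

lemma LeadingOnes_le_length: "LeadingOnes xs \<le> length xs"
  by (induction xs) auto

lemma length_mutate: "ys \<in> set_pmf (mutate p xs) \<Longrightarrow> length ys = length xs"
  by (induction xs arbitrary: ys) auto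

lemma mutate_append:
  "mutate p (xs @ ys) = bind_pmf (mutate p xs) (\<lambda>as. map_pmf (\<lambda>bs. as @ bs) (mutate p ys))"
  by (induction xs) (simp_all add: bind_return_pmf bind_return_pmf' bind_assoc_pmf map_pmf_def)

lemma bind_bernoulli_pmf_conj:
  assumes "0 \<le> p" "p \<le> 1" "0 \<le> q" "q \<le> 1"
  shows "bind_pmf (bernoulli_pmf p) (\<lambda>a. bind_pmf (bernoulli_pmf q) (\<lambda>b. return_pmf (a \<and> b)))
    = bernoulli_pmf (p * q)"
  using assms mult_le_one[of p q] by (simp add: pmf_eq_iff all_bool_eq pmf_bind measure_pmf_single algebra_simps)

lemma mutate_unchanged:
  assumes "0 \<le> p" "p \<le> 1"
  shows "map_pmf (\<lambda>ys. ys = xs) (mutate p xs) = bernoulli_pmf ((1 - p) ^ length xs)"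
proof (induction xs)
  case Nil
  show ?case
    by (rule pmf_eqI) (simp split: split_indicator)
next
  case (Cons x xs)
  define q where "q = (1 - p) ^ length xs"
  have q: "0 \<le> q" "q \<le> 1"
    using assms by (simp_all add: q_def power_le_one)
  have "map_pmf (\<lambda>ys. ys = x # xs) (mutate p (x # xs))
      = bind_pmf (bernoulli_pmf p) (\<lambda>f. map_pmf (\<lambda>ys. \<not> f \<and> ys = xs) (mutate p xs))"
    by (auto simp: map_pmf_def bind_assoc_pmf bind_return_pmf intro!: bind_pmf_cong)
  also have "\<dots> = bind_pmf (bernoulli_pmf p) (\<lambda>f. if f then return_pmf False else bernoulli_pmf q)"
    by (intro bind_pmf_cong refl) (simp add: Cons[symmetric] q_def map_pmf_comp)
  also have "\<dots> = bernoulli_pmf ((1 - p) * q)"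
    using assms q mult_le_one[of "1 - p" q] by (simp add: pmf_eq_iff all_bool_eq pmf_bind) (simp add: algebra_simps)
  finally show ?case
    by (simp add: q_def)
qed

abbreviation uniform_bits :: "nat \<Rightarrow> bool list pmf" where
  "uniform_bits m \<equiv> replicate_pmf m (bernoulli_pmf (1 / 2))"

lemma pmf_map_Cons:
  "pmf (map_pmf ((#) b) M) xs = (case xs of [] \<Rightarrow> 0 | y # ys \<Rightarrow> if y = b then pmf M ys else 0)"
  by (auto simp: pmf_map_inj' intro!: pmf_map_outside split: list.split)

lemma pmf_uniform_bits: "pmf (uniform_bits m) xs = (if length xs = m then 1 / 2 ^ m else 0)"
proof (induction m arbitrary: xs)
  case 0
  show ?case
    by (simp split: split_indicator)
next
  case (Suc m)
  have "uniform_bits (Suc m) = bind_pmf (bernoulli_pmf (1 / 2)) (\<lambda>b. map_pmf ((#) b) (uniform_bits m))"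
    by (simp add: map_pmf_def)
  then show ?case
    by (simp add: pmf_bind pmf_map_Cons Suc split: list.split)
qed

lemma uniform_bits_eq_pmf_of_set: "uniform_bits m = pmf_of_set {xs. length xs = m}"
proof (rule pmf_eqI)
  fix xs :: "bool list"
  have "card {xs :: bool list. length xs = m} = 2 ^ m"
    using card_lists_length_eq[of "UNIV :: bool set" m] by (simp add: card_UNIV_bool)
  moreover have "finite {xs :: bool list. length xs = m}"
    using finite_lists_length_eq[of "UNIV :: bool set" m] by simp
  moreover have "{xs :: bool list. length xs = m} \<noteq> {}"
    by (auto intro: exI[of _ "replicate m True"])
  ultimately show "pmf (uniform_bits m) xs = pmf (pmf_of_set {xs. length xs = m}) xs"
    by (simp add: pmf_uniform_bits)
qed

lemma bind_uniform_bits_mutate: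
  assumes "0 \<le> p" "p \<le> 1"
  shows "bind_pmf (uniform_bits m) (mutate p) = uniform_bits m"
proof (induction m)
  case 0
  show ?case
    by (simp add: bind_return_pmf)
next
  case (Suc m)
  have xor_uniform: "bind_pmf (bernoulli_pmf (1 / 2)) (\<lambda>b. map_pmf (\<lambda>f. b \<noteq> f) (bernoulli_pmf p))
      = bernoulli_pmf (1 / 2)"
    using assms by (simp add: pmf_eq_iff all_bool_eq pmf_bind map_pmf_def field_simps)
  have "bind_pmf (uniform_bits (Suc m)) (mutate p)
      = bind_pmf (bernoulli_pmf (1 / 2)) (\<lambda>b. bind_pmf (bernoulli_pmf p) (\<lambda>f.
          bind_pmf (bind_pmf (uniform_bits m) (mutate p)) (\<lambda>ys. return_pmf ((b \<noteq> f) # ys))))"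
    by (simp add: bind_assoc_pmf bind_return_pmf bind_commute_pmf[of "uniform_bits m"])
  also have "\<dots> = bind_pmf (bind_pmf (bernoulli_pmf (1 / 2)) (\<lambda>b. map_pmf (\<lambda>f. b \<noteq> f) (bernoulli_pmf p)))
      (\<lambda>c. map_pmf ((#) c) (uniform_bits m))"
    by (simp add: Suc bind_assoc_pmf bind_return_pmf map_pmf_def)
  also have "\<dots> = uniform_bits (Suc m)"
    unfolding xor_uniform by (simp add: map_pmf_def)
  finally show ?case .
qed

section \<open>The level chain\<close>

definition free_rider_level :: "nat \<Rightarrow> nat \<Rightarrow> nat pmf" where
  "free_rider_level j m = map_pmf (\<lambda>u. j + LeadingOnes u) (uniform_bits m)"

lemma free_rider_level_0 [simp]: "free_rider_level j 0 = return_pmf j"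
  by (simp add: free_rider_level_def)

lemma free_rider_level_Suc:
  "free_rider_level j (Suc m) = bind_pmf (bernoulli_pmf (1 / 2))
     (\<lambda>b. if b then free_rider_level (Suc j) m else return_pmf j)"
  by (auto simp: free_rider_level_def map_pmf_def bind_assoc_pmf bind_return_pmf intro!: bind_pmf_cong)

definition uniform_on_level :: "nat \<Rightarrow> nat \<Rightarrow> bool list pmf" where
  "uniform_on_level n i =
     (if i < n then map_pmf (\<lambda>u. replicate i True @ False # u) (uniform_bits (n - Suc i))
      else return_pmf (replicate n True))"

definition level_step :: "nat \<Rightarrow> nat \<Rightarrow> nat pmf" where
  "level_step n i =
     (if i < n then bind_pmf (bernoulli_pmf ((1 - 1 / real n) ^ i / real n))
        (\<lambda>improved. if improved then free_rider_level (Suc i) (n - Suc i) else return_pmf i)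
      else return_pmf i)"

fun level_chain :: "nat \<Rightarrow> nat \<Rightarrow> nat pmf" where
  "level_chain n 0 = free_rider_level 0 n"
| "level_chain n (Suc t) = bind_pmf (level_chain n t) (level_step n)"

lemma bind_free_rider_level_uniform_on_level:
  "j + m = n \<Longrightarrow> bind_pmf (free_rider_level j m) (uniform_on_level n)
     = map_pmf (\<lambda>u. replicate j True @ u) (uniform_bits m)"
proof (induction m arbitrary: j)
  case 0
  then show ?case
    by (simp add: bind_return_pmf uniform_on_level_def)
next
  case (Suc m)
  have "bind_pmf (free_rider_level (Suc j) m) (uniform_on_level n)
      = map_pmf (\<lambda>u. replicate j True @ True # u) (uniform_bits m)"
    using Suc.IH[of "Suc j"] Suc.prems by (simp add: replicate_app_Cons_same)
  moreover have "uniform_on_level n j = map_pmf (\<lambda>u. replicate j True @ False # u) (uniform_bits m)"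
    by (simp add: uniform_on_level_def flip: Suc.prems)
  ultimately have "bind_pmf (free_rider_level j (Suc m)) (uniform_on_level n)
      = bind_pmf (bernoulli_pmf (1 / 2)) (\<lambda>b. map_pmf (\<lambda>u. replicate j True @ b # u) (uniform_bits m))"
    by (auto simp: free_rider_level_Suc bind_assoc_pmf bind_return_pmf intro!: bind_pmf_cong)
  then show ?case
    by (simp add: map_pmf_def bind_assoc_pmf bind_return_pmf)
qed

lemma ea_step_on_level:
  assumes "i < n"
  defines "p \<equiv> 1 / real n" and "R \<equiv> replicate i True"
  shows "ea_step n (R @ False # u) = bind_pmf (mutate p R) (\<lambda>a.
    if a = R then bind_pmf (bernoulli_pmf p) (\<lambda>f. map_pmf (\<lambda>u'. R @ f # u') (mutate p u))
    else return_pmf (R @ False # u))"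
proof -
  have level: "LeadingOnes (R @ False # u) = i"
    by (simp add: R_def)
  have accept: "i \<le> LeadingOnes (a @ ys) \<longleftrightarrow> a = R" if "a \<in> set_pmf (mutate p R)" for a ys
    using LeadingOnes_append_ge_iff length_mutate[OF that] by (simp add: R_def)
  show ?thesis
    using assms by (auto simp: ea_step_def p_def[symmetric] level accept map_pmf_def bind_assoc_pmf
        bind_return_pmf mutate_append intro!: bind_pmf_cong)
qed

lemma uniform_on_level_ea_step_lt:
  assumes "i < n"
  defines "W \<equiv> \<lambda>b. map_pmf (\<lambda>u. replicate i True @ b # u) (uniform_bits (n - Suc i))"
  shows "bind_pmf (uniform_on_level n i) (ea_step n)
    = bind_pmf (bernoulli_pmf ((1 - 1 / real n) ^ i / real n)) W"
proof -
  define p where "p = 1 / real n"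
  define R where "R = replicate i True"
  define U where "U = uniform_bits (n - Suc i)"
  define flip_tail where
    "flip_tail u = bind_pmf (bernoulli_pmf p) (\<lambda>f. map_pmf (\<lambda>u'. R @ f # u') (mutate p u))" for u
  have p: "0 \<le> p" "p \<le> 1"
    using assms by (auto simp: p_def)
  have "bind_pmf (uniform_on_level n i) (ea_step n) = bind_pmf U (\<lambda>u. ea_step n (R @ False # u))"
    using assms by (simp add: uniform_on_level_def bind_map_pmf R_def U_def)
  also have "\<dots> = bind_pmf U (\<lambda>u. bind_pmf (mutate p R)
      (\<lambda>a. if a = R then flip_tail u else return_pmf (R @ False # u)))"
    unfolding flip_tail_def p_def R_def by (simp only: ea_step_on_level[OF assms(1)])
  also have "\<dots> = bind_pmf (mutate p R) (\<lambda>a. if a = R then bind_pmf (bernoulli_pmf p) W else W False)"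
  proof (subst bind_commute_pmf, intro bind_pmf_cong refl)
    have "bind_pmf U flip_tail
        = bind_pmf (bernoulli_pmf p) (\<lambda>f. map_pmf (\<lambda>u. R @ f # u) (bind_pmf U (mutate p)))"
      unfolding flip_tail_def by (subst bind_commute_pmf) (simp add: map_bind_pmf)
    then have "bind_pmf U flip_tail = bind_pmf (bernoulli_pmf p) W"
      by (simp add: bind_uniform_bits_mutate[OF p] W_def U_def R_def)
    then show "bind_pmf U (\<lambda>u. if a = R then flip_tail u else return_pmf (R @ False # u))
        = (if a = R then bind_pmf (bernoulli_pmf p) W else W False)" for a
      by (cases "a = R") (simp_all add: W_def U_def R_def map_pmf_def)
  qed
  also have "\<dots> = bind_pmf (map_pmf (\<lambda>a. a = R) (mutate p R))
      (\<lambda>unchanged. bind_pmf (bernoulli_pmf p) (\<lambda>f. W (unchanged \<and> f)))"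
    by (auto simp: bind_map_pmf intro!: bind_pmf_cong)
  also have "\<dots> = bind_pmf (bind_pmf (bernoulli_pmf ((1 - p) ^ i)) (\<lambda>unchanged.
      bind_pmf (bernoulli_pmf p) (\<lambda>f. return_pmf (unchanged \<and> f)))) W"
    by (simp add: mutate_unchanged[OF p] R_def bind_assoc_pmf bind_return_pmf)
  also have "\<dots> = bind_pmf (bernoulli_pmf ((1 - 1 / real n) ^ i / real n)) W"
    using p by (simp add: bind_bernoulli_pmf_conj power_le_one p_def)
  finally show ?thesis .
qed

lemma uniform_on_level_ea_step:
  assumes "i \<le> n"
  shows "bind_pmf (uniform_on_level n i) (ea_step n) = bind_pmf (level_step n i) (uniform_on_level n)"
proof (cases "i < n")
  case True
  define W where "W b = map_pmf (\<lambda>u. replicate i True @ b # u) (uniform_bits (n - Suc i))" for b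
  have "bind_pmf (free_rider_level (Suc i) (n - Suc i)) (uniform_on_level n) = W True"
    using True by (simp add: W_def bind_free_rider_level_uniform_on_level replicate_app_Cons_same)
  moreover have "uniform_on_level n i = W False"
    using True by (simp add: W_def uniform_on_level_def)
  ultimately have "bind_pmf (level_step n i) (uniform_on_level n)
      = bind_pmf (bernoulli_pmf ((1 - 1 / real n) ^ i / real n)) W"
    using True by (auto simp: level_step_def bind_assoc_pmf bind_return_pmf intro!: bind_pmf_cong)
  then show ?thesis
    using uniform_on_level_ea_step_lt[OF True] by (simp add: W_def[abs_def])
next
  case False
  then show ?thesis
    using assms by (simp add: uniform_on_level_def level_step_def ea_step_def bind_return_pmf)
qed

lemma set_pmf_free_rider_level: "set_pmf (free_rider_level j m) \<subseteq> {j..j + m}"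
  using LeadingOnes_le_length by (auto simp: free_rider_level_def set_replicate_pmf)

lemma set_pmf_level_step: "i \<le> n \<Longrightarrow> set_pmf (level_step n i) \<subseteq> {i..n}"
  using set_pmf_free_rider_level[of "Suc i" "n - Suc i"] by (auto simp: level_step_def split: if_splits)

lemma finite_pmf_chain_level_chain: "finite_pmf_chain (level_chain n) (level_step n) {..n}"
proof
  show "set_pmf (level_chain n 0) \<subseteq> {..n}"
    using set_pmf_free_rider_level[of 0 n] by auto
  show "set_pmf (level_step n i) \<subseteq> {..n}" if "i \<in> {..n}" for i
    using set_pmf_level_step[of i n] that by auto
qed simp_all

lemmas set_pmf_level_chain = finite_pmf_chain.set_pmf_subset[OF finite_pmf_chain_level_chain]

lemma ea_state_eq_bind_level_chain:
  "ea_state n t = bind_pmf (level_chain n t) (uniform_on_level n)"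
proof (induction t)
  case 0
  show ?case
    using bind_free_rider_level_uniform_on_level[of 0 n n] by (simp add: uniform_bits_eq_pmf_of_set)
next
  case (Suc t)
  have "ea_state n (Suc t) = bind_pmf (level_chain n t) (\<lambda>i. bind_pmf (uniform_on_level n i) (ea_step n))"
    by (simp add: Suc bind_assoc_pmf)
  also have "\<dots> = bind_pmf (level_chain n t) (\<lambda>i. bind_pmf (level_step n i) (uniform_on_level n))"
    using set_pmf_level_chain[of n t] by (intro bind_pmf_cong refl uniform_on_level_ea_step) auto
  finally show ?case
    by (simp add: bind_assoc_pmf)
qed

lemma map_LeadingOnes_ea_state: "map_pmf LeadingOnes (ea_state n t) = level_chain n t"
proof -
  have "map_pmf LeadingOnes (uniform_on_level n i) = return_pmf i" if "i \<le> n" for i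
    using that by (simp add: uniform_on_level_def map_pmf_comp)
  then have "map_pmf LeadingOnes (ea_state n t) = bind_pmf (level_chain n t) return_pmf"
    using set_pmf_level_chain[of n t]
    by (auto simp: ea_state_eq_bind_level_chain map_bind_pmf intro!: bind_pmf_cong)
  then show ?thesis
    by (simp add: bind_return_pmf')
qed

lemma expected_LO_eq: "expected_LO n t = expect (level_chain n t) real"
  by (simp add: expected_LO_def flip: map_LeadingOnes_ea_state)

lemma finite_set_pmf_free_rider_level: "finite (set_pmf (free_rider_level j m))"
  using set_pmf_free_rider_level by (rule finite_subset) simp

lemma expect_free_rider_level_Suc:
  "expect (free_rider_level j (Suc m)) f = expect (free_rider_level (Suc j) m) f / 2 + f j / 2"
  by (simp add: free_rider_level_Suc expect_bind_bernoulli_pmf finite_set_pmf_free_rider_level)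

lemma expect_free_rider_level: "expect (free_rider_level j m) real = real j + 1 - (1 / 2) ^ m"
proof (induction m arbitrary: j)
  case 0
  show ?case
    by simp
next
  case (Suc m)
  have "expect (free_rider_level j (Suc m)) real = (real (Suc j) + 1 - (1 / 2) ^ m) / 2 + real j / 2"
    by (simp only: expect_free_rider_level_Suc Suc)
  then show ?case
    by (simp add: field_simps)
qed

lemma expect_free_rider_level_power_le:
  fixes q :: real
  assumes "1 \<le> q" "q < 2"
  shows "expect (free_rider_level j m) (\<lambda>k. q ^ k) \<le> q ^ j / (2 - q)"
proof (induction m arbitrary: j)
  case 0
  show ?case
    using assms by (simp add: field_simps)
next
  case (Suc m)
  have "expect (free_rider_level j (Suc m)) (\<lambda>k. q ^ k)
      = expect (free_rider_level (Suc j) m) (\<lambda>k. q ^ k) / 2 + q ^ j / 2"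
    by (rule expect_free_rider_level_Suc)
  also have "\<dots> \<le> q ^ Suc j / (2 - q) / 2 + q ^ j / 2"
    using Suc[of "Suc j"] by (intro add_right_mono divide_right_mono) auto
  also have "\<dots> = q ^ j / (2 - q)"
    using assms by (simp add: field_simps)
  finally show ?case .
qed

lemma expect_free_rider_level_geometric_sum_le:
  fixes r :: real
  assumes "0 \<le> r" "r < 2"
  shows "expect (free_rider_level j m) (\<lambda>k. \<Sum>l<k. r ^ l) \<le> (\<Sum>l<j. r ^ l) + r ^ j / (2 - r)"
proof (induction m arbitrary: j)
  case 0
  show ?case
    using assms by simp
next
  case (Suc m)
  have "expect (free_rider_level j (Suc m)) (\<lambda>k. \<Sum>l<k. r ^ l)
      = expect (free_rider_level (Suc j) m) (\<lambda>k. \<Sum>l<k. r ^ l) / 2 + (\<Sum>l<j. r ^ l) / 2"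
    by (rule expect_free_rider_level_Suc)
  also have "\<dots> \<le> ((\<Sum>l<Suc j. r ^ l) + r ^ Suc j / (2 - r)) / 2 + (\<Sum>l<j. r ^ l) / 2"
    using Suc[of "Suc j"] by (intro add_right_mono divide_right_mono) auto
  also have "\<dots> = (\<Sum>l<j. r ^ l) + r ^ j / (2 - r)"
    using assms by (simp add: field_simps)
  finally show ?case .
qed

lemma expect_level_step:
  assumes "i < n"
  shows "expect (level_step n i) f
    = f i + (1 - 1 / real n) ^ i / real n * (expect (free_rider_level (Suc i) (n - Suc i)) f - f i)"
proof -
  define a where "a = (1 - 1 / real n) ^ i"
  have "0 \<le> a" "a \<le> 1"
    using assms by (simp_all add: a_def power_le_one)
  then have "0 \<le> a / real n" "a / real n \<le> 1"
    using assms by (simp_all add: divide_le_eq)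
  then show ?thesis
    unfolding a_def
    using assms by (simp add: level_step_def expect_bind_bernoulli_pmf finite_set_pmf_free_rider_level
        algebra_simps)
qed

lemma expect_level_step_top: "n \<le> i \<Longrightarrow> expect (level_step n i) f = f i"
  by (simp add: level_step_def)

section \<open>Exponential bounds and the potential\<close>

lemma exp_le_inverse_one_minus: "0 \<le> (x :: real) \<Longrightarrow> x < 1 \<Longrightarrow> exp x \<le> 1 / (1 - x)"
  using exp_minus_ge[of x] by (simp add: exp_minus field_simps)

lemma exp_le_one_plus_plus_square_mult_exp:
  fixes y :: real
  assumes "0 \<le> y"
  shows "exp y \<le> 1 + y + y\<^sup>2 * exp y"
proof -
  have "(1 - y) * exp y \<le> 1"
    using exp_minus_ge[of y] by (simp add: exp_minus field_simps)
  then have "exp y - 1 \<le> y * exp y"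
    by (simp add: algebra_simps)
  then have "exp y - 1 - y \<le> y * (y * exp y)"
    using assms mult_left_mono[of "exp y - 1" "y * exp y" y] by (simp add: algebra_simps)
  then show ?thesis
    by (simp add: power2_eq_square algebra_simps)
qed

lemma exp_le_quadratic_geometric:
  fixes \<mu> d :: real
  assumes "0 \<le> \<mu>" "\<mu> \<le> 1 / 20" "0 \<le> d" "d \<le> 3 * real m"
  shows "exp (\<mu> * d) \<le> 1 + \<mu> * d + 800 * \<mu>\<^sup>2 * (10 / 7) ^ m"
proof -
  have "d\<^sup>2 = 400 * (d / 20)\<^sup>2"
    by (simp add: power2_eq_square)
  also have "\<dots> \<le> 800 * exp (d / 20)"
    using exp_lower_Taylor_quadratic[of "d / 20"] assms by simp
  finally have d2: "d\<^sup>2 \<le> 800 * exp (d / 20)" .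
  have "exp (\<mu> * d) \<le> exp (d / 20)"
    using mult_right_mono[OF assms(2,3)] by simp
  then have "\<mu>\<^sup>2 * (d\<^sup>2 * exp (\<mu> * d)) \<le> \<mu>\<^sup>2 * (800 * exp (d / 20) * exp (d / 20))"
    using d2 by (intro mult_left_mono mult_mono) auto
  then have "(\<mu> * d)\<^sup>2 * exp (\<mu> * d) \<le> \<mu>\<^sup>2 * (800 * exp (d / 20) * exp (d / 20))"
    by (simp add: power_mult_distrib mult.assoc)
  also have "\<dots> = 800 * \<mu>\<^sup>2 * exp (d / 10)"
    by (simp flip: exp_add)
  also have "\<dots> \<le> 800 * \<mu>\<^sup>2 * (10 / 7) ^ m"
  proof -
    have "exp (d / 10) \<le> exp (3 / 10) ^ m"
      using assms(4) by (simp add: flip: exp_of_nat_mult)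
    also have "\<dots> \<le> (10 / 7) ^ m"
      using exp_le_inverse_one_minus[of "3 / 10"] by (intro power_mono) auto
    finally show ?thesis
      by (simp add: mult_left_mono)
  qed
  finally show ?thesis
    using exp_le_one_plus_plus_square_mult_exp[of "\<mu> * d"] assms by simp
qed

text \<open>Since \<open>(1 - 1/n)^i * potential_base n ^ i = 1\<close>, an improvement at level \<open>i\<close> is
  exactly as much less likely as its potential gain is larger, so the expected increase of the
  potential per step does not depend on the level.\<close>

definition potential_base :: "nat \<Rightarrow> real" where
  "potential_base n = real n / (real n - 1)"

definition potential :: "nat \<Rightarrow> nat \<Rightarrow> real" where
  "potential n k = (\<Sum>l<k. potential_base n ^ l)"

lemma potential_base_bounds:
  assumes "3 \<le> n"
  shows "1 < potential_base n" "potential_base n \<le> 3 / 2"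
  using assms by (simp_all add: potential_base_def field_simps)

lemma potential_base_nonneg: "0 \<le> potential_base n"
  by (cases n) (simp_all add: potential_base_def)

lemma power_one_minus_inverse_eq:
  assumes "2 \<le> n"
  shows "(1 - 1 / real n) ^ i = 1 / potential_base n ^ i"
proof -
  have "1 - 1 / real n = 1 / potential_base n"
    using assms by (simp add: potential_base_def field_simps)
  then show ?thesis
    by (simp add: power_one_over)
qed

lemma power_potential_base_le_exp1:
  assumes "2 \<le> n" "l < n"
  shows "potential_base n ^ l \<le> exp 1"
proof -
  have "potential_base n = 1 + 1 / (real n - 1)"
    using assms by (simp add: potential_base_def field_simps)
  then have "potential_base n \<le> exp (1 / (real n - 1))"
    using exp_ge_add_one_self[of "1 / (real n - 1)"] by linarith
  then have "potential_base n ^ l \<le> exp (1 / (real n - 1)) ^ l"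
    using assms by (intro power_mono) (simp_all add: potential_base_def)
  also have "\<dots> = exp (real l / (real n - 1))"
    by (simp flip: exp_of_nat_mult)
  also have "\<dots> \<le> exp 1"
    using assms by (simp add: field_simps)
  finally show ?thesis .
qed

lemma exp1_le_power_potential_base:
  assumes "2 \<le> n"
  shows "exp 1 \<le> potential_base n ^ n"
proof -
  have "exp (1 / real n) \<le> potential_base n"
    using exp_le_inverse_one_minus[of "1 / real n"] assms by (simp add: potential_base_def field_simps)
  then have "exp (1 / real n) ^ n \<le> potential_base n ^ n"
    by (intro power_mono) auto
  then show ?thesis
    using assms by (simp flip: exp_of_nat_mult)
qed

lemma exp_minus_one_le_power_one_minus_inverse:
  assumes "2 \<le> n" "i < n"
  shows "exp (-1) \<le> (1 - 1 / real n) ^ i"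
proof -
  have "0 < potential_base n ^ i"
    using assms by (simp add: potential_base_def)
  then have "1 / exp 1 \<le> 1 / potential_base n ^ i"
    using power_potential_base_le_exp1[OF assms] by (simp add: frac_le)
  also have "\<dots> = (1 - 1 / real n) ^ i"
    using power_one_minus_inverse_eq[OF assms(1)] by simp
  finally show ?thesis
    by (simp add: exp_minus inverse_eq_divide)
qed

lemma potential_ge:
  assumes "2 \<le> n"
  shows "(real n - 1) * (exp 1 - 1) \<le> potential n n"
proof -
  have "potential_base n \<noteq> 1"
    using assms by (simp add: potential_base_def)
  then have "potential n n = (potential_base n ^ n - 1) / (potential_base n - 1)"
    by (simp add: potential_def geometric_sum)
  also have "\<dots> = (real n - 1) * (potential_base n ^ n - 1)"
    using assms by (simp add: potential_base_def field_simps)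
  finally show ?thesis
    using exp1_le_power_potential_base[OF assms] assms by simp
qed

lemma potential_diff_eq: "i \<le> k \<Longrightarrow> potential n k - potential n i = (\<Sum>l=i..<k. potential_base n ^ l)"
  by (simp add: potential_def sum.atLeastLessThan_concat[of 0 i k, symmetric] lessThan_atLeast0)

lemma potential_mono: "i \<le> k \<Longrightarrow> potential n i \<le> potential n k"
  using potential_diff_eq[of i k n] sum_nonneg[of "{i..<k}" "\<lambda>l. potential_base n ^ l"]
  by (simp add: potential_base_nonneg)

lemma potential_diff_le:
  assumes "2 \<le> n" "i \<le> k" "k \<le> n"
  shows "potential n k - potential n i \<le> 3 * (real k - real i)"
proof -
  have "(\<Sum>l=i..<k. potential_base n ^ l) \<le> (\<Sum>l=i..<k. 3)"
  proof (rule sum_mono)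
    fix l
    assume "l \<in> {i..<k}"
    then have "potential_base n ^ l \<le> exp 1"
      using assms by (intro power_potential_base_le_exp1) auto
    then show "potential_base n ^ l \<le> 3"
      using exp_le by linarith
  qed
  then show ?thesis
    using assms by (simp add: potential_diff_eq of_nat_diff)
qed

lemma exp_potential_le_power:
  assumes "2 \<le> n" "0 \<le> \<mu>" "\<mu> \<le> 1 / 20" "i \<le> k" "k \<le> n"
  shows "exp (\<mu> * (potential n k - potential n i)) \<le> (10 / 7) ^ (k - i)"
proof -
  have "\<mu> * (potential n k - potential n i) \<le> 1 / 20 * (3 * (real k - real i))"
    using potential_diff_le[OF assms(1,4,5)] potential_mono[OF assms(4)] assms(2,3)
    by (intro mult_mono) auto
  then have "exp (\<mu> * (potential n k - potential n i)) \<le> exp (3 / 20) ^ (k - i)"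
    using assms(4) by (simp add: of_nat_diff flip: exp_of_nat_mult)
  also have "\<dots> \<le> (10 / 7) ^ (k - i)"
    using exp_le_inverse_one_minus[of "3 / 20"] by (intro power_mono) auto
  finally show ?thesis .
qed

section \<open>Drift of the level chain\<close>

text \<open>The expected number of free riders falls short of one by \<open>(1/2)^(n - i - 1)\<close>
  because the bit string ends; this is the resulting loss of drift.\<close>

definition boundary_loss :: "nat \<Rightarrow> nat \<Rightarrow> real" where
  "boundary_loss n i = 2 / real n * (1 / 2) ^ (n - i)"

lemma level_step_progress:
  assumes "2 \<le> n" "i \<le> n"
  shows "real i + 2 / (exp 1 * real n) - boundary_loss n i \<le> expect (level_step n i) real"
proof (cases "i < n")
  case True
  define a where "a = (1 - 1 / real n) ^ i"
  define x :: real where "x = (1 / 2) ^ (n - i)"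
  have a: "exp (-1) \<le> a" "a \<le> 1"
    using exp_minus_one_le_power_one_minus_inverse[OF assms(1) True] assms
    by (simp_all add: a_def power_le_one)
  have "n - i = Suc (n - Suc i)"
    using True by simp
  then have "(1 / 2 :: real) ^ (n - Suc i) = 2 * x"
    by (simp add: x_def)
  then have "expect (level_step n i) real = real i + a / real n * (2 - 2 * x)"
    using True by (simp add: expect_level_step expect_free_rider_level a_def)
  moreover have "2 / (exp 1 * real n) - 2 / real n * x \<le> a / real n * (2 - 2 * x)"
  proof -
    have "a * x \<le> x"
      using a(2) by (simp add: x_def mult_left_le_one_le)
    moreover have "1 / exp 1 \<le> a"
      using a(1) by (simp add: exp_minus inverse_eq_divide)
    ultimately have "2 / exp 1 - 2 * x \<le> a * (2 - 2 * x)"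
      by (simp add: algebra_simps)
    then have "(2 / exp 1 - 2 * x) / real n \<le> a * (2 - 2 * x) / real n"
      by (rule divide_right_mono) simp
    moreover have "2 / (exp 1 * real n) - 2 / real n * x = (2 / exp 1 - 2 * x) / real n"
      using assms by (simp add: field_simps)
    ultimately show ?thesis
      by simp
  qed
  ultimately show ?thesis
    by (simp add: x_def boundary_loss_def)
next
  case False
  then have "i = n"
    using assms by simp
  moreover have "2 / (exp 1 * real n) \<le> 2 / real n"
    using assms by (intro divide_left_mono) (auto simp: order.trans[OF _ exp_ge_add_one_self])
  ultimately show ?thesis
    by (simp add: expect_level_step_top boundary_loss_def)
qed

lemma expected_LO_ge_progress_minus_boundary_loss:
  assumes "2 \<le> n"
  shows "2 * real t / (exp 1 * real n)
      - (\<Sum>s<t. expect (level_chain n s) (boundary_loss n))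
    \<le> expected_LO n t"
proof -
  have "expect (level_chain n 0) real + real t * (2 / (exp 1 * real n))
      - (\<Sum>s<t. expect (level_chain n s) (boundary_loss n))
    \<le> expect (level_chain n t) real"
    using level_step_progress[OF assms]
    by (intro finite_pmf_chain.additive_drift[OF finite_pmf_chain_level_chain]) auto
  moreover have "0 \<le> expect (level_chain n 0) real"
    by (rule integral_nonneg_AE) simp
  moreover have "real t * (2 / (exp 1 * real n)) = 2 * real t / (exp 1 * real n)"
    by simp
  ultimately show ?thesis
    unfolding expected_LO_eq by argo
qed

lemma exp_potential_diff_le:
  assumes "2 \<le> n" "0 \<le> \<mu>" "\<mu> \<le> 1 / 20" "i \<le> k" "k \<le> n"
  shows "exp (\<mu> * (potential n k - potential n i))
    \<le> 1 - \<mu> * potential n i + \<mu> * potential n k + 800 * \<mu>\<^sup>2 / (10 / 7) ^ i * (10 / 7) ^ k"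
proof -
  have "exp (\<mu> * (potential n k - potential n i))
      \<le> 1 + \<mu> * (potential n k - potential n i) + 800 * \<mu>\<^sup>2 * (10 / 7) ^ (k - i)"
    using potential_mono[of i k n] potential_diff_le[of n i k] assms
    by (intro exp_le_quadratic_geometric) (simp_all add: of_nat_diff)
  also have "(10 / 7 :: real) ^ (k - i) = (10 / 7) ^ k / (10 / 7) ^ i"
    using assms by (simp add: power_diff)
  finally show ?thesis
    by (simp add: algebra_simps)
qed

lemma expect_exp_potential_free_rider_level:
  assumes n: "3 \<le> n" and \<mu>: "0 \<le> \<mu>" "\<mu> \<le> 1 / 20" and i: "i < n"
  shows "expect (free_rider_level (Suc i) (n - Suc i)) (\<lambda>k. exp (\<mu> * (potential n k - potential n i)))
    \<le> 1 + \<mu> * (2 * potential_base n ^ i / (2 - potential_base n)) + 2000 * \<mu>\<^sup>2"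
proof -
  define L where "L = free_rider_level (Suc i) (n - Suc i)"
  define r where "r = potential_base n"
  define q :: real where "q = 10 / 7"
  define c where "c = 800 * \<mu>\<^sup>2 / q ^ i"
  have r: "1 < r" "r \<le> 3 / 2"
    using potential_base_bounds[OF n] by (simp_all add: r_def)
  have fin: "finite (set_pmf L)"
    by (simp add: L_def finite_set_pmf_free_rider_level)
  have "exp (\<mu> * (potential n k - potential n i)) \<le> 1 - \<mu> * potential n i + \<mu> * potential n k + c * q ^ k"
    if "k \<in> set_pmf L" for k
    unfolding c_def q_def using that set_pmf_free_rider_level[of "Suc i" "n - Suc i"] i n \<mu>
    by (intro exp_potential_diff_le) (auto simp: L_def)
  then have "expect L (\<lambda>k. exp (\<mu> * (potential n k - potential n i)))
      \<le> expect L (\<lambda>k. 1 - \<mu> * potential n i + \<mu> * potential n k + c * q ^ k)"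
    using fin by (intro expect_mono_finite)
  also have "\<dots> = 1 - \<mu> * potential n i + \<mu> * expect L (potential n) + c * expect L (\<lambda>k. q ^ k)"
    using fin by (simp add: integrable_measure_pmf_finite)
  also have "\<dots> \<le> 1 - \<mu> * potential n i + \<mu> * (potential n i + r ^ i + r ^ Suc i / (2 - r))
      + c * (q ^ Suc i / (2 - q))"
  proof -
    have "expect L (potential n) \<le> potential n i + r ^ i + r ^ Suc i / (2 - r)"
      using expect_free_rider_level_geometric_sum_le[of r "Suc i" "n - Suc i"] r
      by (simp add: L_def r_def potential_def[abs_def])
    moreover have "expect L (\<lambda>k. q ^ k) \<le> q ^ Suc i / (2 - q)"
      unfolding L_def q_def by (rule expect_free_rider_level_power_le) simp_all
    moreover have "0 \<le> c"
      by (simp add: c_def q_def)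
    ultimately show ?thesis
      using \<mu> by (intro add_mono mult_left_mono order.refl) simp_all
  qed
  also have "\<dots> = 1 + \<mu> * (2 * r ^ i / (2 - r)) + 2000 * \<mu>\<^sup>2"
    using r by (simp add: c_def q_def field_simps)
  finally show ?thesis
    by (simp add: L_def r_def)
qed

definition exp_potential_growth :: "nat \<Rightarrow> real \<Rightarrow> real" where
  "exp_potential_growth n \<mu> = 2 * \<mu> / (real n * (2 - potential_base n)) + 2000 * \<mu>\<^sup>2 / real n"

lemma exp_potential_growth_nonneg: "3 \<le> n \<Longrightarrow> 0 \<le> \<mu> \<Longrightarrow> 0 \<le> exp_potential_growth n \<mu>"
  using potential_base_bounds[of n] by (simp add: exp_potential_growth_def)

lemma level_step_exp_potential:
  assumes n: "3 \<le> n" and \<mu>: "0 \<le> \<mu>" "\<mu> \<le> 1 / 20" and i: "i \<le> n"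
  shows "expect (level_step n i) (\<lambda>k. exp (\<mu> * potential n k))
    \<le> (1 + exp_potential_growth n \<mu>) * exp (\<mu> * potential n i)"
proof (cases "i < n")
  case True
  define L where "L = free_rider_level (Suc i) (n - Suc i)"
  define P where "P = exp (\<mu> * potential n i)"
  define a where "a = (1 - 1 / real n) ^ i"
  define r where "r = potential_base n"
  have r: "1 < r" "r \<le> 3 / 2"
    using potential_base_bounds[OF n] by (simp_all add: r_def)
  have a: "0 \<le> a" "a \<le> 1" "a * r ^ i = 1"
    using n power_one_minus_inverse_eq[of n i] r by (simp_all add: a_def r_def power_le_one)
  have "exp (\<mu> * potential n k) = P * exp (\<mu> * (potential n k - potential n i))" for k
    by (simp add: P_def algebra_simps flip: exp_add)
  then have "expect L (\<lambda>k. exp (\<mu> * potential n k))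
      = P * expect L (\<lambda>k. exp (\<mu> * (potential n k - potential n i)))"
    by simp
  also have "\<dots> \<le> P * (1 + \<mu> * (2 * r ^ i / (2 - r)) + 2000 * \<mu>\<^sup>2)"
    using expect_exp_potential_free_rider_level[OF n \<mu> True]
    by (intro mult_left_mono) (simp_all add: L_def P_def r_def)
  finally have EL: "expect L (\<lambda>k. exp (\<mu> * potential n k)) \<le> \<dots>" .
  have "expect (level_step n i) (\<lambda>k. exp (\<mu> * potential n k))
      = P + a / real n * (expect L (\<lambda>k. exp (\<mu> * potential n k)) - P)"
    using True by (simp add: expect_level_step L_def P_def a_def)
  also have "\<dots> \<le> P + a / real n * (P * (\<mu> * (2 * r ^ i / (2 - r)) + 2000 * \<mu>\<^sup>2))"
    using EL a by (intro add_left_mono mult_left_mono) (simp_all add: algebra_simps)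
  also have "\<dots> = P * (1 + 2 * \<mu> / (real n * (2 - r)) * (a * r ^ i) + a * (2000 * \<mu>\<^sup>2 / real n))"
    using n r by (simp add: field_simps)
  also have "\<dots> \<le> P * (1 + exp_potential_growth n \<mu>)"
  proof -
    have "a * (2000 * \<mu>\<^sup>2 / real n) \<le> 2000 * \<mu>\<^sup>2 / real n"
      using a by (intro mult_left_le_one_le) simp_all
    then show ?thesis
      using a(3) by (intro mult_left_mono) (simp_all add: exp_potential_growth_def r_def P_def)
  qed
  finally show ?thesis
    by (simp add: P_def mult.commute)
next
  case False
  then show ?thesis
    using i exp_potential_growth_nonneg[OF n \<mu>(1)] by (simp add: expect_level_step_top)
qed

lemma expect_exp_potential_level_chain:
  assumes n: "3 \<le> n" and \<mu>: "0 \<le> \<mu>" "\<mu> \<le> 1 / 20"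
  shows "expect (level_chain n t) (\<lambda>k. exp (\<mu> * potential n k))
    \<le> 7 / 4 * (1 + exp_potential_growth n \<mu>) ^ t"
proof -
  have "expect (free_rider_level 0 n) (\<lambda>k. exp (\<mu> * potential n k))
      \<le> expect (free_rider_level 0 n) (\<lambda>k. (10 / 7) ^ k)"
    using set_pmf_free_rider_level[of 0 n] exp_potential_le_power[of n \<mu> 0] n \<mu>
    by (intro expect_mono_finite finite_set_pmf_free_rider_level) (auto simp: potential_def)
  also have "\<dots> \<le> 7 / 4"
    using expect_free_rider_level_power_le[of "10 / 7" 0 n] by simp
  finally have init: "expect (level_chain n 0) (\<lambda>k. exp (\<mu> * potential n k)) \<le> 7 / 4"
    by simp
  have "expect (level_chain n t) (\<lambda>k. exp (\<mu> * potential n k))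
      \<le> (1 + exp_potential_growth n \<mu>) ^ t * expect (level_chain n 0) (\<lambda>k. exp (\<mu> * potential n k))"
    using level_step_exp_potential[OF n \<mu>] exp_potential_growth_nonneg[OF n \<mu>(1)]
    by (intro finite_pmf_chain.multiplicative_drift[OF finite_pmf_chain_level_chain]) auto
  also have "\<dots> \<le> (1 + exp_potential_growth n \<mu>) ^ t * (7 / 4)"
    using init exp_potential_growth_nonneg[OF n \<mu>(1)] by (intro mult_left_mono) auto
  finally show ?thesis
    by simp
qed

lemma one_plus_power_le_exp_mult:
  fixes g :: real
  assumes "0 \<le> g" "s \<le> t"
  shows "(1 + g) ^ s \<le> exp (real t * g)"
proof -
  have "(1 + g) ^ s \<le> (1 + g) ^ t"
    using assms by (intro power_increasing) auto
  also have "\<dots> \<le> exp g ^ t"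
    using assms by (intro power_mono) (auto simp: add.commute)
  finally show ?thesis
    by (simp add: exp_of_nat_mult)
qed

lemma boundary_loss_le_exp_potential:
  assumes "2 \<le> n" "0 \<le> \<mu>" "\<mu> \<le> 1 / 20" "i \<le> n"
  shows "boundary_loss n i \<le> 2 / real n / exp (\<mu> * potential n n) * exp (\<mu> * potential n i)"
proof -
  have "exp (\<mu> * (potential n n - potential n i)) \<le> 2 ^ (n - i)"
    using exp_potential_le_power[of n \<mu> i n] assms
    by (auto intro: order.trans[OF _ power_mono[of "10 / 7" 2]])
  then have "(1 / 2) ^ (n - i) \<le> exp (\<mu> * potential n i) / exp (\<mu> * potential n n)"
    by (simp add: power_one_over exp_diff right_diff_distrib field_simps)
  then have "2 / real n * (1 / 2) ^ (n - i) \<le> 2 / real n * (exp (\<mu> * potential n i) / exp (\<mu> * potential n n))"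
    by (rule mult_left_mono) simp
  then show ?thesis
    by (simp add: boundary_loss_def)
qed

lemma sum_boundary_loss_le:
  assumes n: "3 \<le> n" and \<mu>: "0 \<le> \<mu>" "\<mu> \<le> 1 / 20"
  shows "(\<Sum>s<t. expect (level_chain n s) (boundary_loss n))
    \<le> 7 / 2 * real t / real n * exp (real t * exp_potential_growth n \<mu> - \<mu> * potential n n)"
proof -
  define g where "g = exp_potential_growth n \<mu>"
  define c where "c = 2 / real n / exp (\<mu> * potential n n)"
  have g: "0 \<le> g"
    using exp_potential_growth_nonneg[OF n \<mu>(1)] by (simp add: g_def)
  have c: "0 \<le> c"
    by (simp add: c_def)
  have "expect (level_chain n s) (boundary_loss n) \<le> c * (7 / 4 * exp (real t * g))"
    if "s < t" for s
  proof -
    have "boundary_loss n i \<le> c * exp (\<mu> * potential n i)" if "i \<in> set_pmf (level_chain n s)" for i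
      unfolding c_def using set_pmf_level_chain[of n s] that n \<mu>
      by (intro boundary_loss_le_exp_potential) auto
    then have "expect (level_chain n s) (boundary_loss n)
        \<le> expect (level_chain n s) (\<lambda>i. c * exp (\<mu> * potential n i))"
      using finite_subset[OF set_pmf_level_chain[of n s]] by (intro expect_mono_finite) auto
    also have "\<dots> \<le> c * (7 / 4 * (1 + g) ^ s)"
      using mult_left_mono[OF expect_exp_potential_level_chain[OF n \<mu>, of s] c] by (simp add: g_def)
    also have "\<dots> \<le> c * (7 / 4 * exp (real t * g))"
      using g c that by (intro mult_left_mono one_plus_power_le_exp_mult) auto
    finally show ?thesis .
  qed
  then have "(\<Sum>s<t. expect (level_chain n s) (boundary_loss n))
      \<le> (\<Sum>s<t. c * (7 / 4 * exp (real t * g)))"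
    by (intro sum_mono) simp
  also have "\<dots> = 7 / 2 * real t / real n * exp (real t * g - \<mu> * potential n n)"
    by (simp add: c_def exp_diff field_simps)
  finally show ?thesis
    by (simp add: g_def)
qed

section \<open>The time bound\<close>

lemma time_bound_le_square:
  assumes "1 \<le> n" "real t \<le> (exp 1 - 1) / 2 * real n ^ 2 - real n powr (3 / 2) * ln (real n)"
  shows "real t \<le> real n ^ 2"
proof -
  have "0 \<le> real n powr (3 / 2) * ln (real n)"
    using assms(1) by simp
  moreover have "(exp 1 - 1) / 2 * real n ^ 2 \<le> real n ^ 2"
    using mult_right_mono[OF exp_le, of "real n ^ 2"] by (simp add: field_simps)
  ultimately show ?thesis
    using assms(2) by linarith
qed

lemma sqrt_ge_20: "400 \<le> n \<Longrightarrow> 20 \<le> sqrt (real n)"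
  using real_sqrt_le_mono[of 400 "real n"] by (simp add: real_sqrt_eq_iff)

lemma powr_three_halves: "0 \<le> x \<Longrightarrow> x powr (3 / 2) = x * sqrt x"
proof -
  assume "0 \<le> x"
  have "x powr (3 / 2) = x powr (1 + 1 / 2)"
    by simp
  also have "\<dots> = x powr 1 * x powr (1 / 2)"
    by (rule powr_add)
  finally show ?thesis
    using \<open>0 \<le> x\<close> by (simp add: powr_half_sqrt)
qed

lemma time_mult_exp_potential_growth_le:
  assumes n: "400 \<le> n"
    and t: "real t \<le> (exp 1 - 1) / 2 * real n ^ 2 - real n powr (3 / 2) * ln (real n)"
  defines "\<mu> \<equiv> 1 / sqrt (real n)"
  shows "real t * exp_potential_growth n \<mu> \<le> \<mu> * (exp 1 - 1) * real n - 2 * ln (real n) + 2001"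
proof -
  define s where "s = sqrt (real n)"
  have nr: "400 \<le> real n"
    using n by simp
  have s: "20 \<le> s" "s * s = real n"
    using sqrt_ge_20[OF n] by (simp_all add: s_def)
  have \<mu>: "0 \<le> \<mu>" "\<mu> \<le> 1 / 20" "\<mu> = 1 / s"
    using s frac_le[of 1 1 20 s] by (simp_all add: \<mu>_def s_def)
  have t_le: "real t \<le> real n ^ 2"
    using time_bound_le_square[OF _ t] n by simp
  have "real t * exp_potential_growth n \<mu>
      = 2 * \<mu> * real t / real n + 2 * \<mu> * real t / (real n * (real n - 2)) + 2000 * real t / real n ^ 2"
    using nr s by (simp add: exp_potential_growth_def potential_base_def \<mu>(3) field_simps power2_eq_square)
  moreover have "2 * \<mu> * real t / real n \<le> \<mu> * (exp 1 - 1) * real n - 2 * ln (real n)"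
  proof -
    have "2 / (s * real n) * real t
        \<le> 2 / (s * real n) * ((exp 1 - 1) / 2 * real n ^ 2 - real n * s * ln (real n))"
      using t s by (intro mult_left_mono) (simp_all add: powr_three_halves s_def)
    then show ?thesis
      using s nr by (simp add: \<mu>(3) field_simps power2_eq_square)
  qed
  moreover have "2 * \<mu> * real t / (real n * (real n - 2)) \<le> 1"
  proof -
    have "2 * \<mu> * real t / (real n * (real n - 2)) \<le> 2 * \<mu> * real n ^ 2 / (real n * (real n - 2))"
      using t_le \<mu> nr by (intro divide_right_mono mult_left_mono) auto
    also have "\<dots> = 2 * \<mu> * (real n / (real n - 2))"
      using nr by (simp add: field_simps power2_eq_square)
    also have "\<dots> \<le> 2 * (1 / 20) * 2"
      using \<mu> nr by (intro mult_mono) (auto simp: field_simps)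
    finally show ?thesis
      by simp
  qed
  moreover have "2000 * real t / real n ^ 2 \<le> 2000"
    using t_le nr by (simp add: field_simps)
  ultimately show ?thesis
    by linarith
qed

lemma exp_potential_exponent_le:
  assumes n: "400 \<le> n"
    and t: "real t \<le> (exp 1 - 1) / 2 * real n ^ 2 - real n powr (3 / 2) * ln (real n)"
  defines "\<mu> \<equiv> 1 / sqrt (real n)"
  shows "real t * exp_potential_growth n \<mu> - \<mu> * potential n n \<le> 2002 - 2 * ln (real n)"
proof -
  have \<mu>: "0 \<le> \<mu>" "\<mu> \<le> 1 / 20"
    using sqrt_ge_20[OF n] frac_le[of 1 1 20 "sqrt (real n)"] by (simp_all add: \<mu>_def)
  have "\<mu> * ((real n - 1) * (exp 1 - 1)) \<le> \<mu> * potential n n"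
    using potential_ge[of n] n \<mu> by (intro mult_left_mono) auto
  moreover have "\<mu> * (exp 1 - 1) \<le> 1"
    using \<mu> exp_le by (intro order.trans[OF mult_mono[of \<mu> "1 / 20" "exp 1 - 1" 2]]) auto
  moreover have "\<mu> * ((real n - 1) * (exp 1 - 1)) = \<mu> * (exp 1 - 1) * real n - \<mu> * (exp 1 - 1)"
    by (simp add: algebra_simps)
  ultimately show ?thesis
    using time_mult_exp_potential_growth_le[OF n t, folded \<mu>_def] by linarith
qed

lemma sum_boundary_loss_bounded:
  assumes n: "400 \<le> n"
    and t: "real t \<le> (exp 1 - 1) / 2 * real n ^ 2 - real n powr (3 / 2) * ln (real n)"
  shows "(\<Sum>s<t. expect (level_chain n s) (boundary_loss n)) \<le> 4 * exp 2002"
proof -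
  define \<mu> where "\<mu> = 1 / sqrt (real n)"
  have nr: "400 \<le> real n"
    using n by simp
  have \<mu>: "0 \<le> \<mu>" "\<mu> \<le> 1 / 20"
    using sqrt_ge_20[OF n] frac_le[of 1 1 20 "sqrt (real n)"] by (simp_all add: \<mu>_def)
  have t_le: "real t \<le> real n ^ 2"
    using time_bound_le_square[OF _ t] n by simp
  have "(\<Sum>s<t. expect (level_chain n s) (boundary_loss n))
      \<le> 7 / 2 * real t / real n * exp (real t * exp_potential_growth n \<mu> - \<mu> * potential n n)"
    using n \<mu> by (intro sum_boundary_loss_le) auto
  also have "\<dots> \<le> 7 / 2 * real t / real n * exp (2002 - 2 * ln (real n))"
    using exp_potential_exponent_le[OF n t] by (intro mult_left_mono) (simp_all add: \<mu>_def)
  also have "exp (2002 - 2 * ln (real n)) = exp 2002 / real n ^ 2"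
  proof -
    have "exp (2 * ln (real n)) = exp (ln (real n)) ^ 2"
      using exp_of_nat_mult[of 2 "ln (real n)"] by simp
    then show ?thesis
      using nr by (simp add: exp_diff)
  qed
  also have "7 / 2 * real t / real n * (exp 2002 / real n ^ 2) \<le> 7 / 2 * exp 2002 / real n"
    using t_le nr by (simp add: field_simps power2_eq_square)
  also have "\<dots> \<le> 4 * exp 2002"
    using nr by (simp add: field_simps)
  finally show ?thesis .
qed

theorem theorem11:
  shows "\<exists>C::real. \<forall>(n::nat) (t::nat). n \<ge> 1 \<longrightarrow>
     real t \<le> (exp 1 - 1) / 2 * real n ^ 2 - real n powr (3/2) * ln (real n) \<longrightarrow>
     expected_LO n t \<ge> 2 * real t / (exp 1 * real n) - C"
proof (intro exI allI impI)
  fix n t :: nat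
  assume n: "n \<ge> 1"
    and t: "real t \<le> (exp 1 - 1) / 2 * real n ^ 2 - real n powr (3/2) * ln (real n)"
  show "2 * real t / (exp 1 * real n) - (800 + 4 * exp 2002) \<le> expected_LO n t"
  proof (cases "400 \<le> n")
    case True
    then show ?thesis
      using expected_LO_ge_progress_minus_boundary_loss[of n t] sum_boundary_loss_bounded[OF True t] by simp
  next
    case False
    have "2 * real t / (exp 1 * real n) \<le> 2 * real n ^ 2 / (1 * real n)"
      using time_bound_le_square[OF n t] n by (intro frac_le mult_right_mono) auto
    also have "\<dots> \<le> 800"
      using False by (simp add: power2_eq_square)
    finally have "2 * real t / (exp 1 * real n) \<le> 800" .
    moreover have "0 \<le> expected_LO n t"
      unfolding expected_LO_def by (rule integral_nonneg_AE) simp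
    ultimately show ?thesis
      using exp_gt_zero[of 2002] by linarith
  qed
qed

end
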